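(* Let $B$ be a blueprint and $\sim$ a congruence on $B$. Then the absorbing ideal $I_\sim=\{e\in B: eb\sim e\text{ for all }b\in B\}$ is an ideal of $B$. Moreover, $I_\sim$ is either empty or an equivalence class of $\sim$.
   Context: A monoid is a commutative semigroup $A$, written multiplicatively, with neutral element $1$. For a monoid $A$, $\mathbb N[A]$ denotes the semiring of finite formal sums $\sum a_i$ of elements $a_i\in A$ (repetitions allowed), with empty sum $\underline0$ and multiplication extended bilinearly from $A$. A pre-addition on $A$ is a relation $\mathcal R\subseteq\mathbb N[A]\times\mathbb N[A]$, written $\sum a_i\equiv\sum b_j$, which is an equivalence relation and satisfies: if $\sum a_i\equiv\sum b_j$ and $\sum c_k\equiv\sum d_l$, then $\sum a_i+\sum c_k\equiv\sum b_j+\sum d_l$ and $\sum_{i,k}a_ic_k\equiv\sum_{j,l}b_jd_l$. A blueprint $B=(A,\mathcal R)$ is a monoid $A$ with a pre-addition $\mathcal R$; we write $a\in B$ for $a\in A$. An element $e$ with $e\equiv\underline0$ is a zero of $B$. For an equivalence relation $\sim$ on $A$, its linear extension $\sim_{\mathbb N}$ is the equivalence relation on $\mathbb N[A]$ generated by $\sum_{i=1}^n a_i\sim_{\mathbb N}\sum_{i=1}^n b_i$ whenever $a_i\sim b_i$ for all $i$; and $\sim_{\mathcal R}$ is the smallest equivalence relation on $\mathbb N[A]$ containing both $\mathcal R$ and $\sim_{\mathbb N}$. A congruence on $B$ is an equivalence relation $\sim$ on $A$ such that (C1) $\sim_{\mathbb N}$ is a pre-addition on $A$, and (C2) the restriction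 of $\sim_{\mathcal R}$ to $A$ equals $\sim$. For a subset $I\subseteq B$, let $\sim^I$ be the equivalence relation on $A$ with $a\sim^I b$ iff $a=b$ or $a,b\in I$, and let $\sim_I$ be the relation on $A$ with $a\sim_I b$ iff there is a finite sequence $a\equiv\sum_k c_{1,k}\sim^I_{\mathbb N}\sum_k d_{1,k}\equiv\sum_k c_{2,k}\sim^I_{\mathbb N}\cdots\sim^I_{\mathbb N}\sum_k d_{n,k}\equiv b$ with $c_{i,k},d_{i,k}\in A$. An ideal of $B$ is a subset $I\subseteq B$ such that (I1) $ab\in I$ for all $a\in I$, $b\in B$; (I2) every zero of $B$ lies in $I$; (I3) if $a\sim_I b$ and $b\in I$, then $a\in I$. *)

theory Defs
  imports "HOL-Library.Multiset"
begin

(* The monoid A is modelled as a type 'a of class comm_monoid_mult (every element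
   of the type is an element of A). N[A] is 'a multiset; formal sum is multiset
   union (+), the empty sum is {#}, and an element a is the one-term sum {#a#}. *)

definition nmult :: "'a::comm_monoid_mult multiset \<Rightarrow> 'a multiset \<Rightarrow> 'a multiset" where
  "nmult M N = (\<Sum>a\<in>#M. \<Sum>c\<in>#N. {#a * c#})"

definition pre_addition :: "('a::comm_monoid_mult multiset \<times> 'a multiset) set \<Rightarrow> bool" where
  "pre_addition R \<longleftrightarrow> equiv UNIV R \<and>
     (\<forall>x y z w. (x, y) \<in> R \<longrightarrow> (z, w) \<in> R \<longrightarrow>
        (x + z, y + w) \<in> R \<and> (nmult x z, nmult y w) \<in> R)"

definition equiv_closure :: "('b \<times> 'b) set \<Rightarrow> ('b \<times> 'b) set" where
  "equiv_closure S = (S \<union> S\<inverse>)\<^sup>*"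

(* linear extension of a relation on A: generated by (sum a_i, sum b_i) with a_i ~ b_i *)
definition lin_ext :: "('a \<times> 'a) set \<Rightarrow> ('a multiset \<times> 'a multiset) set" where
  "lin_ext r = equiv_closure
     {(image_mset fst P, image_mset snd P) | P. set_mset P \<subseteq> r}"

definition sim_R :: "('a::comm_monoid_mult multiset \<times> 'a multiset) set \<Rightarrow> ('a \<times> 'a) set
     \<Rightarrow> ('a multiset \<times> 'a multiset) set" where
  "sim_R R r = equiv_closure (R \<union> lin_ext r)"

definition congruence :: "('a::comm_monoid_mult multiset \<times> 'a multiset) set \<Rightarrow> ('a \<times> 'a) set \<Rightarrow> bool" where
  "congruence R r \<longleftrightarrow> equiv UNIV r \<and> pre_addition (lin_ext r) \<and>
     {(a, b). ({#a#}, {#b#}) \<in> sim_R R r} = r"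

definition is_zero :: "('a::comm_monoid_mult multiset \<times> 'a multiset) set \<Rightarrow> 'a \<Rightarrow> bool" where
  "is_zero R e \<longleftrightarrow> ({#e#}, {#}) \<in> R"

definition simI :: "'a set \<Rightarrow> ('a \<times> 'a) set" where
  "simI I = {(a, b). a = b \<or> (a \<in> I \<and> b \<in> I)}"

(* a ~_I b: a == S c1 ~^I_N S d1 == S c2 ~^I_N ... ~^I_N S dn == b, n >= 1 *)
definition sim_ideal :: "('a::comm_monoid_mult multiset \<times> 'a multiset) set \<Rightarrow> 'a set \<Rightarrow> ('a \<times> 'a) set" where
  "sim_ideal R I = {(a, b). ({#a#}, {#b#}) \<in> R O (lin_ext (simI I) O R)\<^sup>+}"

definition is_ideal :: "('a::comm_monoid_mult multiset \<times> 'a multiset) set \<Rightarrow> 'a set \<Rightarrow> bool" where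
  "is_ideal R I \<longleftrightarrow>
     (\<forall>a b. a \<in> I \<longrightarrow> a * b \<in> I) \<and>
     (\<forall>e. is_zero R e \<longrightarrow> e \<in> I) \<and>
     (\<forall>a b. (a, b) \<in> sim_ideal R I \<longrightarrow> b \<in> I \<longrightarrow> a \<in> I)"

definition absorbing_ideal :: "('a::comm_monoid_mult \<times> 'a) set \<Rightarrow> 'a set" where
  "absorbing_ideal r = {e. \<forall>b. (e * b, e) \<in> r}"

end

theory Submission
  imports Defs
begin

(* Write I for the absorbing ideal of the congruence r on B = (A, R).
   Two facts about r carry the whole argument: r is an equivalence relation on A
   that is compatible with multiplication (from the linear extension being a
   pre-addition), and r is the restriction of sim_R R r to one-term sums.
   For any such multiplicative equivalence, the absorbing set I is closed under
   multiplication, any two of its elements are related, and it is saturated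
   (a ~ b with b in I forces a in I); hence it is empty or one class.
   Since simI I is then contained in r, every chain witnessing a ~_I b lives
   inside the equivalence relation sim_R R r, so a ~_I b implies a ~ b, which
   gives axiom (I3) by saturation.  Axiom (I2) holds because e == 0 gives
   eb == 0 == e. *)

lemma equiv_closure_incl: "S \<subseteq> equiv_closure S"
  unfolding equiv_closure_def by auto

lemma equiv_closure_mono: "S \<subseteq> T \<Longrightarrow> equiv_closure S \<subseteq> equiv_closure T"
  unfolding equiv_closure_def by (intro rtrancl_mono) auto

lemma equiv_equiv_closure: "equiv UNIV (equiv_closure S)"
proof -
  have "sym (S \<union> S\<inverse>)" by (auto simp: sym_def)
  then have "sym ((S \<union> S\<inverse>)\<^sup>*)" by (rule sym_rtrancl)
  then show ?thesis
    unfolding equiv_closure_def equiv_def by (auto simp: refl_on_def trans_rtrancl)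
qed

lemma lin_ext_mono: "r \<subseteq> s \<Longrightarrow> lin_ext r \<subseteq> lin_ext s"
  unfolding lin_ext_def by (intro equiv_closure_mono) blast

lemma lin_ext_single:
  assumes "(a, b) \<in> r"
  shows "({#a#}, {#b#}) \<in> lin_ext r"
proof -
  let ?P = "{#(a, b)#}"
  have "set_mset ?P \<subseteq> r" using assms by simp
  then have "(image_mset fst ?P, image_mset snd ?P)
          \<in> {(image_mset fst P, image_mset snd P) | P. set_mset P \<subseteq> r}"
    by blast
  then show ?thesis
    unfolding lin_ext_def using equiv_closure_incl by force
qed

lemma sim_R_incl_R: "R \<subseteq> sim_R R r"
  unfolding sim_R_def using equiv_closure_incl by blast

lemma sim_R_incl_lin_ext: "lin_ext r \<subseteq> sim_R R r"
  unfolding sim_R_def using equiv_closure_incl by blast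

lemma sim_R_sym: "(x, y) \<in> sim_R R r \<Longrightarrow> (y, x) \<in> sim_R R r"
  using equiv_equiv_closure unfolding sim_R_def equiv_def by (meson symD)

lemma sim_R_trans: "trans (sim_R R r)"
  using equiv_equiv_closure unfolding sim_R_def equiv_def by blast

lemma nmult_single: "nmult {#a#} {#b#} = {#a * b#}"
  by (simp add: nmult_def)

lemma congruence_single_iff:
  assumes "congruence R r"
  shows "(a, b) \<in> r \<longleftrightarrow> ({#a#}, {#b#}) \<in> sim_R R r"
  using assms unfolding congruence_def by blast

(* (C1) makes a congruence compatible with multiplication: a ~ b implies ac ~ bc. *)
lemma congruence_mult:
  assumes cong: "congruence R r" and ab: "(a, b) \<in> r"
  shows "(a * c, b * c) \<in> r"
proof -
  have pre: "pre_addition (lin_ext r)" using cong by (simp add: congruence_def)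
  have "(c, c) \<in> r" using cong by (simp add: congruence_def equiv_def refl_on_def)
  then have "({#c#}, {#c#}) \<in> lin_ext r" by (rule lin_ext_single)
  with pre lin_ext_single[OF ab]
  have "(nmult {#a#} {#c#}, nmult {#b#} {#c#}) \<in> lin_ext r"
    unfolding pre_addition_def by blast
  then have "({#a * c#}, {#b * c#}) \<in> sim_R R r"
    using sim_R_incl_lin_ext by (auto simp: nmult_single)
  then show ?thesis using congruence_single_iff[OF cong] by blast
qed

(* Throughout, r is an equivalence on a commutative monoid with a ~ b ==> ac ~ bc;
   only these two properties of a congruence are used. *)
context
  fixes r :: "('a::comm_monoid_mult \<times> 'a) set"
  assumes equiv_r: "equiv UNIV r"
    and mult_r: "\<And>a b c. (a, b) \<in> r \<Longrightarrow> (a * c, b * c) \<in> r"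
begin

(* (I1): a(bc) ~ a ~ ab, so ab is again absorbing. *)
lemma absorbing_ideal_mult:
  assumes "a \<in> absorbing_ideal r"
  shows "a * b \<in> absorbing_ideal r"
proof -
  have "(a * b * c, a * b) \<in> r" for c
  proof -
    have "(a * (b * c), a) \<in> r" "(a * b, a) \<in> r"
      using assms by (auto simp: absorbing_ideal_def)
    moreover have "(a, a * b) \<in> r" using \<open>(a * b, a) \<in> r\<close> equiv_r by (meson equivE symE)
    ultimately show ?thesis
      using equiv_r by (metis equivE mult.assoc transE)
  qed
  then show ?thesis by (simp add: absorbing_ideal_def)
qed

(* Any two absorbing elements are related: e ~ ef = fe ~ f. *)
lemma absorbing_ideal_related:
  assumes "e \<in> absorbing_ideal r" "f \<in> absorbing_ideal r"
  shows "(e, f) \<in> r"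
proof -
  have "(e * f, e) \<in> r" "(e * f, f) \<in> r"
    using assms by (auto simp: absorbing_ideal_def mult.commute)
  then show ?thesis using equiv_r by (meson equivE symE transE)
qed

(* The absorbing set is a union of classes: ac ~ bc ~ b ~ a. *)
lemma absorbing_ideal_saturated:
  assumes ab: "(a, b) \<in> r" and b: "b \<in> absorbing_ideal r"
  shows "a \<in> absorbing_ideal r"
proof -
  have "(a * c, a) \<in> r" for c
  proof -
    have "(a * c, b * c) \<in> r" using mult_r[OF ab] .
    moreover have "(b * c, b) \<in> r" using b by (simp add: absorbing_ideal_def)
    moreover have "(b, a) \<in> r" using ab equiv_r by (meson equivE symE)
    ultimately show ?thesis using equiv_r by (meson equivE transE)
  qed
  then show ?thesis by (simp add: absorbing_ideal_def)
qed

lemma absorbing_ideal_empty_or_class: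
  "absorbing_ideal r = {} \<or> absorbing_ideal r \<in> UNIV // r"
proof (cases "absorbing_ideal r = {}")
  case False
  then obtain e where e: "e \<in> absorbing_ideal r" by blast
  have "absorbing_ideal r = r `` {e}"
  proof
    show "absorbing_ideal r \<subseteq> r `` {e}"
      using absorbing_ideal_related[OF e] by blast
    show "r `` {e} \<subseteq> absorbing_ideal r"
    proof
      fix f assume "f \<in> r `` {e}"
      then have "(f, e) \<in> r" using equiv_r by (auto elim: equivE symE)
      then show "f \<in> absorbing_ideal r" using absorbing_ideal_saturated e by blast
    qed
  qed
  then show ?thesis by (auto intro: quotientI)
qed simp

lemma simI_absorbing_ideal: "simI (absorbing_ideal r) \<subseteq> r"
  using absorbing_ideal_related equiv_r
  by (auto simp: simI_def equiv_def refl_on_def)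

end

(* (I2): if e == 0 then eb == 0*b = 0 == e, so eb ~ e. *)
lemma zero_in_absorbing_ideal:
  assumes pre: "pre_addition R" and cong: "congruence R r" and zero: "is_zero R e"
  shows "e \<in> absorbing_ideal r"
proof -
  have "(e * b, e) \<in> r" for b
  proof -
    have e0: "({#e#}, {#}) \<in> R" using zero by (simp add: is_zero_def)
    have "({#b#}, {#b#}) \<in> R" using pre by (simp add: pre_addition_def equiv_def refl_on_def)
    then have "(nmult {#e#} {#b#}, nmult {#} {#b#}) \<in> R"
      using pre e0 unfolding pre_addition_def by blast
    then have "({#e * b#}, {#}) \<in> sim_R R r"
      using sim_R_incl_R by (auto simp: nmult_single nmult_def)
    moreover have "({#}, {#e#}) \<in> sim_R R r"
      using e0 sim_R_incl_R sim_R_sym by blast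
    ultimately have "({#e * b#}, {#e#}) \<in> sim_R R r"
      using sim_R_trans by (meson transD)
    then show ?thesis using congruence_single_iff[OF cong] by blast
  qed
  then show ?thesis by (simp add: absorbing_ideal_def)
qed

(* If the identification of I lies inside r, every chain witnessing a ~_I b is
   a chain inside the equivalence relation sim_R R r, hence a ~ b. *)
lemma sim_ideal_subset:
  assumes cong: "congruence R r" and I: "simI I \<subseteq> r"
  shows "sim_ideal R I \<subseteq> r"
proof -
  have "lin_ext (simI I) O R \<subseteq> sim_R R r O sim_R R r"
    using lin_ext_mono[OF I] sim_R_incl_lin_ext sim_R_incl_R by blast
  then have step: "lin_ext (simI I) O R \<subseteq> sim_R R r"
    using trans_O_subset[OF sim_R_trans] by blast
  have "(lin_ext (simI I) O R)\<^sup>+ \<subseteq> (sim_R R r)\<^sup>+"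
    using step by (rule trancl_mono_subset)
  also have "\<dots> = sim_R R r" using sim_R_trans by (rule trancl_id)
  finally have "(lin_ext (simI I) O R)\<^sup>+ \<subseteq> sim_R R r" .
  then have "R O (lin_ext (simI I) O R)\<^sup>+ \<subseteq> sim_R R r O sim_R R r"
    using sim_R_incl_R by blast
  then have "R O (lin_ext (simI I) O R)\<^sup>+ \<subseteq> sim_R R r"
    using trans_O_subset[OF sim_R_trans] by blast
  then show ?thesis
    unfolding sim_ideal_def using congruence_single_iff[OF cong] by blast
qed

theorem mainTheorem10:
  fixes R :: "('a::comm_monoid_mult multiset \<times> 'a multiset) set"
    and r :: "('a \<times> 'a) set"
  assumes "pre_addition R"
    and "congruence R r"
  shows "is_ideal R (absorbing_ideal r) \<and>
         (absorbing_ideal r = {} \<or> absorbing_ideal r \<in> UNIV // r)"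
proof -
  have equiv_r: "equiv UNIV r" using assms(2) by (simp add: congruence_def)
  note mult_r = congruence_mult[OF assms(2)]
  let ?I = "absorbing_ideal r"
  have "sim_ideal R ?I \<subseteq> r"
    using sim_ideal_subset[OF assms(2) simI_absorbing_ideal[OF equiv_r mult_r]] .
  then have "(a, b) \<in> sim_ideal R ?I \<Longrightarrow> b \<in> ?I \<Longrightarrow> a \<in> ?I" for a b
    using absorbing_ideal_saturated[OF equiv_r mult_r] by blast
  then have "is_ideal R ?I"
    unfolding is_ideal_def
    using absorbing_ideal_mult[OF equiv_r mult_r] zero_in_absorbing_ideal[OF assms]
    by blast
  then show ?thesis
    using absorbing_ideal_empty_or_class[OF equiv_r mult_r] by blast
qed

end
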